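(* Let $(V,\ell)$ be an $N$-strict $L_\infty$-algebra with finite-dimensional components, $V_0=\mathbb{R}^n$, with $H^1(V,\ell)=0$, and let $h_1,h_2$, the norms and $\alpha_\ell$ be as in the context. Then for every $u_1\in\ker(\ell_1|_{V_0})$ with $\|u_1\|<\frac1{12\|h_1\|\alpha_\ell}$ there exists a deformation $u_t:[0,2)\to MC(V,\ell)\subset\mathbb{R}^n$ of $0$ by Maurer–Cartan elements with $\partial_{t=0}u_t=u_1$.
   Context: An $L_\infty$-algebra is a sequence $\ell=(\ell_k)_{k\geq0}$ of graded symmetric $k$-linear degree-$1$ maps $\ell_k:V^{\times k}\to V$, $\ell_0=0$, satisfying the $L_\infty$ Jacobi identities; it is $N$-strict if $\ell_k=0$ for all $k\geq N$. $H^1(V,\ell)=\ker(\ell_1:V_1\to V_2)/\operatorname{im}(\ell_1:V_0\to V_1)$. $h_1:V_1\to V_0$, $h_2:V_2\to V_1$ are linear maps with $\ell_1\circ h_1+h_2\circ\ell_1=\mathrm{id}_{V_1}$. Norms are fixed on $V_0,V_1$; $\|h_1\|$ and $\|\ell_i\|$ (for $\ell_i:V_0^{\times i}\to V_1$) are operator norms, and $\alpha_\ell=\sum_{i=1}^N\frac{\|\ell_i\|}{i!}$. $MC(v)=\sum_{k\geq1}\frac1{k!}\ell_k(v,\ldots,v)$ and $MC(V,\ell)$ is its zero set. A deformation of $0$ is a smooth path starting at $0$ consisting of Maurer–Cartan elements. *)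

theory Defs
  imports "HOL-Analysis.Analysis"
begin

text \<open>A (Z-)graded real vector space is modelled as a family of subspaces Vd d of an
ambient real normed vector space whose sum is direct and spans everything.\<close>

definition graded_space :: "(int \<Rightarrow> 'v::real_vector set) \<Rightarrow> bool" where
  "graded_space Vd \<longleftrightarrow>
     (\<forall>d. subspace (Vd d)) \<and>
     (\<forall>I x. finite I \<longrightarrow> (\<forall>i\<in>I. x i \<in> Vd i) \<longrightarrow> (\<Sum>i\<in>I. x i) = 0 \<longrightarrow> (\<forall>i\<in>I. x i = 0)) \<and>
     span (\<Union>d. Vd d) = UNIV"

definition hom_list :: "(int \<Rightarrow> 'v set) \<Rightarrow> 'v list \<Rightarrow> int list \<Rightarrow> bool" where
  "hom_list Vd xs ds \<longleftrightarrow> length xs = length ds \<and> (\<forall>i<length xs. xs ! i \<in> Vd (ds ! i))"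

definition perm_list :: "(nat \<Rightarrow> nat) \<Rightarrow> 'a list \<Rightarrow> 'a list" where
  "perm_list \<sigma> xs = map (\<lambda>i. xs ! \<sigma> i) [0..<length xs]"

definition koszul_sign :: "int list \<Rightarrow> (nat \<Rightarrow> nat) \<Rightarrow> real" where
  "koszul_sign ds \<sigma> = (-1) ^ card {(p, q). p < q \<and> q < length ds \<and> \<sigma> q < \<sigma> p \<and>
                                            odd (ds ! \<sigma> p * ds ! \<sigma> q)}"

definition unshuffles :: "nat \<Rightarrow> nat \<Rightarrow> (nat \<Rightarrow> nat) set" where
  "unshuffles i n = {\<sigma>. \<sigma> permutes {..<n} \<and>
       (\<forall>p q. p < q \<and> q < i \<longrightarrow> \<sigma> p < \<sigma> q) \<and>
       (\<forall>p q. i \<le> p \<and> p < q \<and> q < n \<longrightarrow> \<sigma> p < \<sigma> q)}"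

text \<open>L-infinity algebra in the shifted (degree 1, graded symmetric) convention;
  l k is the k-ary bracket, applied to lists of length k.\<close>
definition Linf_algebra :: "(int \<Rightarrow> 'v::real_vector set) \<Rightarrow> (nat \<Rightarrow> 'v list \<Rightarrow> 'v) \<Rightarrow> bool" where
  "Linf_algebra Vd l \<longleftrightarrow>
     graded_space Vd \<and>
     l 0 [] = 0 \<and>
     (\<forall>xs i. i < length xs \<longrightarrow> linear (\<lambda>x. l (length xs) (xs[i := x]))) \<and>
     (\<forall>xs ds. hom_list Vd xs ds \<longrightarrow> l (length xs) xs \<in> Vd (sum_list ds + 1)) \<and>
     (\<forall>xs ds \<sigma>. hom_list Vd xs ds \<longrightarrow> \<sigma> permutes {..<length xs} \<longrightarrow>
        l (length xs) (perm_list \<sigma> xs) = koszul_sign ds \<sigma> *\<^sub>R l (length xs) xs) \<and>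
     (\<forall>xs ds. hom_list Vd xs ds \<longrightarrow> length xs \<ge> 1 \<longrightarrow>
        (\<Sum>i\<in>{1..length xs}. \<Sum>\<sigma>\<in>unshuffles i (length xs).
           koszul_sign ds \<sigma> *\<^sub>R
             l (length xs - i + 1) (l i (take i (perm_list \<sigma> xs)) # drop i (perm_list \<sigma> xs))) = 0)"

definition opnorm_on :: "'a::real_normed_vector set \<Rightarrow> ('a \<Rightarrow> 'b::real_normed_vector) \<Rightarrow> real" where
  "opnorm_on S f = Sup {norm (f x) | x. x \<in> S \<and> norm x \<le> 1}"

definition multi_opnorm_on :: "'a::real_normed_vector set \<Rightarrow> nat \<Rightarrow> ('a list \<Rightarrow> 'b::real_normed_vector) \<Rightarrow> real" where
  "multi_opnorm_on S k f =
     Sup {norm (f xs) | xs. length xs = k \<and> set xs \<subseteq> S \<and> (\<forall>x\<in>set xs. norm x \<le> 1)}"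

definition alpha_l :: "(int \<Rightarrow> 'v::real_normed_vector set) \<Rightarrow> (nat \<Rightarrow> 'v list \<Rightarrow> 'v) \<Rightarrow> nat \<Rightarrow> real" where
  "alpha_l Vd l N = (\<Sum>i\<in>{1..N}. multi_opnorm_on (Vd 0) i (l i) / fact i)"

definition MC :: "(nat \<Rightarrow> 'v::real_normed_vector list \<Rightarrow> 'v) \<Rightarrow> 'v \<Rightarrow> 'v" where
  "MC l v = (\<Sum>k. (1 / fact k) *\<^sub>R l k (replicate k v))"

definition Cinf_on :: "real set \<Rightarrow> (real \<Rightarrow> 'a::real_normed_vector) \<Rightarrow> bool" where
  "Cinf_on S u \<longleftrightarrow> (\<exists>D. (\<forall>t\<in>S. D 0 t = u t) \<and>
      (\<forall>k. \<forall>t\<in>S. (D k has_vector_derivative D (Suc k) t) (at t within S)))"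

end

theory Submission
  imports Defs "HOL-Analysis.FPS_Convergence"
begin

(*
  In coordinates on V_0 the Kuranishi equation
    u = s u_1 - h_1 (sum_{k >= 2} l_k(u,...,u) / k!)
  is a polynomial fixed-point system without linear terms; its iteration converges X-adically to
  formal power series u(s), and a majorant estimate shows that they converge for |s| < r.
  Since l_1 u_1 = 0, the homotopy identity gives MC(u) = h_2 (l_1 MC(u)), and the Bianchi identity
  sum_j l_{j+1}(MC(u), u, ..., u) / j! = 0, a consequence of the Jacobi identities, rewrites this as
  MC(u) = B_u(MC(u)) for a linear map B_u of size O(|u|); hence MC(u(s)) = 0 for small s.
  The time change t -> c (1 - exp(-t/c)) with c < r has derivative 1 at 0, maps [0, 2) into [0, c)
  and keeps the curve smooth.
*)

section \<open>Unshuffles\<close>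

lemma sorted_wrt_map_upt:
  assumes "\<And>p q. a \<le> p \<Longrightarrow> p < q \<Longrightarrow> q < b \<Longrightarrow> f p < f q"
  shows "sorted_wrt (<) (map f [a..<b])"
  unfolding sorted_wrt_iff_nth_less using assms by auto

lemma unshuffles_permutes: "\<sigma> \<in> unshuffles i n \<Longrightarrow> \<sigma> permutes {..<n}"
  unfolding unshuffles_def by auto

lemma unshuffle_map_eq_sorted_list_of_set:
  assumes s: "\<sigma> \<in> unshuffles i n"
  shows "map \<sigma> [0..<i] = sorted_list_of_set (\<sigma> ` {..<i})"
    and "map \<sigma> [i..<n] = sorted_list_of_set (\<sigma> ` {i..<n})"
proof -
  have "sorted_wrt (<) (map \<sigma> [0..<i])" "sorted_wrt (<) (map \<sigma> [i..<n])"
    using s unfolding unshuffles_def by (auto intro!: sorted_wrt_map_upt)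
  then show "map \<sigma> [0..<i] = sorted_list_of_set (\<sigma> ` {..<i})"
    and "map \<sigma> [i..<n] = sorted_list_of_set (\<sigma> ` {i..<n})"
    by (auto intro!: sorted_distinct_set_unique simp: strict_sorted_iff atLeast0LessThan)
qed

lemma unshuffle_image_tail:
  assumes s: "\<sigma> \<in> unshuffles i n" and "i \<le> n"
  shows "\<sigma> ` {i..<n} = {..<n} - \<sigma> ` {..<i}"
proof -
  have p: "\<sigma> permutes {..<n}" using s by (rule unshuffles_permutes)
  have "{..<n} = {..<i} \<union> {i..<n}" using assms(2) by auto
  then have "\<sigma> ` {..<i} \<union> \<sigma> ` {i..<n} = {..<n}"
    using permutes_image[OF p] by (metis image_Un)
  moreover have "\<sigma> ` {..<i} \<inter> \<sigma> ` {i..<n} = {}"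
    using image_Int[OF permutes_inj[OF p], of "{..<i}" "{i..<n}"] by auto
  ultimately show ?thesis by blast
qed

lemma unshuffles_eqI:
  assumes s: "\<sigma> \<in> unshuffles i n" and t: "\<tau> \<in> unshuffles i n" and "i \<le> n"
    and eq: "\<sigma> ` {..<i} = \<tau> ` {..<i}"
  shows "\<sigma> = \<tau>"
proof
  fix p
  have head: "map \<sigma> [0..<i] = map \<tau> [0..<i]"
    using unshuffle_map_eq_sorted_list_of_set(1)[OF s] unshuffle_map_eq_sorted_list_of_set(1)[OF t]
      eq by simp
  have tail: "map \<sigma> [i..<n] = map \<tau> [i..<n]"
    using unshuffle_map_eq_sorted_list_of_set(2)[OF s] unshuffle_map_eq_sorted_list_of_set(2)[OF t]
      unshuffle_image_tail[OF s \<open>i \<le> n\<close>] unshuffle_image_tail[OF t \<open>i \<le> n\<close>] eq by simp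
  consider "p < i" | "i \<le> p" "p < n" | "n \<le> p" by linarith
  then show "\<sigma> p = \<tau> p"
  proof cases
    case 1
    then show ?thesis using head by (simp add: map_eq_conv)
  next
    case 2
    then show ?thesis using tail by (simp add: map_eq_conv)
  next
    case 3
    then show ?thesis using unshuffles_permutes[OF s] unshuffles_permutes[OF t]
      by (simp add: permutes_def)
  qed
qed

lemma unshuffle_with_head_image:
  assumes S: "S \<subseteq> {..<n}" "card S = i"
  obtains \<sigma> where "\<sigma> \<in> unshuffles i n" "\<sigma> ` {..<i} = S"
proof -
  define xs where "xs = sorted_list_of_set S"
  define ys where "ys = sorted_list_of_set ({..<n} - S)"
  define \<sigma> where "\<sigma> p = (if p < n then (xs @ ys) ! p else p)" for p
  have fS: "finite S" using S(1) finite_subset by blast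
  have i: "i \<le> n" using S card_mono[OF _ S(1)] by auto
  have lx: "length xs = i" and ly: "length ys = n - i"
    using S fS by (simp_all add: xs_def ys_def card_Diff_subset)
  have sx: "sorted_wrt (<) xs" "set xs = S" and sy: "sorted_wrt (<) ys" "set ys = {..<n} - S"
    using fS by (auto simp: xs_def ys_def)
  have lxy: "length (xs @ ys) = n" using lx ly i by simp
  have dxy: "distinct (xs @ ys)" using sx sy by (auto simp: strict_sorted_iff)
  have img: "\<sigma> ` {..<n} = {..<n}"
  proof -
    have "\<sigma> ` {..<n} = set (xs @ ys)"
      using lxy by (auto simp: \<sigma>_def set_conv_nth)
    then show ?thesis using sx sy S by auto
  qed
  have inj: "inj_on \<sigma> {..<n}"
    unfolding inj_on_def \<sigma>_def using dxy lxy by (auto simp: distinct_conv_nth)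
  have perm: "\<sigma> permutes {..<n}"
  proof (rule bij_imp_permutes)
    show "bij_betw \<sigma> {..<n} {..<n}" using inj img by (simp add: bij_betw_def)
  qed (simp add: \<sigma>_def)
  have head: "\<sigma> p = xs ! p" if "p < i" for p
    using that lx i by (auto simp: \<sigma>_def nth_append)
  have tail: "\<sigma> p = ys ! (p - i)" if "i \<le> p" "p < n" for p
    using that lx by (auto simp: \<sigma>_def nth_append)
  have "\<sigma> \<in> unshuffles i n"
    unfolding unshuffles_def
  proof (intro CollectI conjI allI impI perm)
    fix p q assume "p < q \<and> q < i"
    then show "\<sigma> p < \<sigma> q" using head sx(1) lx by (simp add: sorted_wrt_nth_less)
  next
    fix p q assume "i \<le> p \<and> p < q \<and> q < n"
    then show "\<sigma> p < \<sigma> q" using tail sorted_wrt_nth_less[OF sy(1), of "p - i" "q - i"] ly by auto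
  qed
  moreover have "\<sigma> ` {..<i} = S"
    using head lx sx(2) by (auto simp: set_conv_nth image_iff)
  ultimately show ?thesis by (rule that)
qed

lemma card_unshuffles:
  assumes "i \<le> n"
  shows "card (unshuffles i n) = n choose i"
proof -
  have "bij_betw (\<lambda>\<sigma>. \<sigma> ` {..<i}) (unshuffles i n) {S. S \<subseteq> {..<n} \<and> card S = i}"
  proof (rule bij_betwI')
    fix \<sigma> assume s: "\<sigma> \<in> unshuffles i n"
    have p: "\<sigma> permutes {..<n}" using s by (rule unshuffles_permutes)
    show "\<sigma> ` {..<i} \<in> {S. S \<subseteq> {..<n} \<and> card S = i}"
      using permutes_image[OF p] assms card_image[OF inj_on_subset[OF permutes_inj[OF p]]]
      by auto
  next
    fix S assume "S \<in> {S. S \<subseteq> {..<n} \<and> card S = i}"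
    then show "\<exists>\<sigma>\<in>unshuffles i n. S = \<sigma> ` {..<i}"
      by (metis (mono_tags, lifting) mem_Collect_eq unshuffle_with_head_image)
  qed (use unshuffles_eqI assms in blast)
  then show ?thesis
    using bij_betw_same_card n_subsets[of "{..<n}" i] by fastforce
qed

section \<open>Strict L-infinity algebras on degree-zero elements\<close>

definition lists_of_length :: "'a set \<Rightarrow> nat \<Rightarrow> 'a list set" where
  "lists_of_length A k = {xs. set xs \<subseteq> A \<and> length xs = k}"

lemma lists_of_length_Suc:
  "lists_of_length A (Suc k) = (\<lambda>(a, xs). a # xs) ` (A \<times> lists_of_length A k)"
  unfolding lists_of_length_def by (auto simp: length_Suc_conv)

lemma linear_sum_scaleR_image:
  assumes "linear f"
  shows "f (\<Sum>b\<in>B. x b *\<^sub>R b) = (\<Sum>b\<in>B. x b *\<^sub>R f b)"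
  by (simp add: linear_sum[OF assms] linear_scale[OF assms])

locale strict_Linf_algebra =
  fixes Vd :: "int \<Rightarrow> 'v::real_normed_vector set" and l :: "nat \<Rightarrow> 'v list \<Rightarrow> 'v" and N :: nat
  assumes Linf: "Linf_algebra Vd l" and strict: "\<forall>k\<ge>N. \<forall>xs. l k xs = 0"
begin

lemma subspace_Vd: "subspace (Vd d)"
  using Linf unfolding Linf_algebra_def graded_space_def by auto

lemma bracket_Nil: "l 0 [] = 0"
  using Linf unfolding Linf_algebra_def by auto

lemma bracket_eq_0_ge: "N \<le> k \<Longrightarrow> l k xs = 0"
  using strict by auto

lemma linear_bracket_slot: "linear (\<lambda>z. l (length pre + Suc (length rest)) (pre @ z # rest))"
proof -
  have "\<forall>xs i. i < length xs \<longrightarrow> linear (\<lambda>x. l (length xs) (xs[i := x]))"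
    using Linf unfolding Linf_algebra_def by blast
  moreover have "length pre < length (pre @ 0 # rest)" by simp
  ultimately have "linear (\<lambda>x. l (length (pre @ 0 # rest)) ((pre @ 0 # rest)[length pre := x]))"
    by blast
  then show ?thesis by simp
qed

lemma linear_bracket_head: "linear (\<lambda>z. l (Suc (length rest)) (z # rest))"
  using linear_bracket_slot[of "[]" rest] by simp

lemma linear_bracket_1: "linear (\<lambda>z. l 1 [z])"
  using linear_bracket_head[of "[]"] by simp

lemma bracket_zero_slot: "l (length pre + Suc (length rest)) (pre @ 0 # rest) = 0"
  using linear_0[OF linear_bracket_slot] .

lemma bracket_zero_head: "l (Suc (length rest)) (0 # rest) = 0"
  using bracket_zero_slot[of "[]"] by simp

lemma bracket_in_Vd: "hom_list Vd xs ds \<Longrightarrow> l (length xs) xs \<in> Vd (sum_list ds + 1)"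
  using Linf unfolding Linf_algebra_def by auto

lemma bracket_in_Vd1: "set xs \<subseteq> Vd 0 \<Longrightarrow> l (length xs) xs \<in> Vd 1"
  using bracket_in_Vd[of xs "replicate (length xs) 0"]
  by (auto simp: hom_list_def sum_list_replicate nth_mem subsetD)

lemma bracket_head_in_Vd2:
  assumes "y \<in> Vd 1" "set xs \<subseteq> Vd 0"
  shows "l (Suc (length xs)) (y # xs) \<in> Vd 2"
proof -
  have "hom_list Vd (y # xs) (1 # replicate (length xs) 0)"
    using assms unfolding hom_list_def by (auto simp: nth_Cons' nth_mem subsetD)
  from bracket_in_Vd[OF this] show ?thesis by (simp add: sum_list_replicate)
qed

lemma Vd_sum: "(\<And>i. i \<in> I \<Longrightarrow> f i \<in> Vd d) \<Longrightarrow> sum f I \<in> Vd d"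
  using subspace_sum[OF subspace_Vd] by blast

lemma Vd_scaleR: "x \<in> Vd d \<Longrightarrow> c *\<^sub>R x \<in> Vd d"
  using subspace_Vd subspace_scale by blast

lemma bracket_replicate_sum_expand:
  assumes B: "finite B"
  shows "l (length pre + k) (pre @ replicate k (\<Sum>b\<in>B. x b *\<^sub>R b)) =
    (\<Sum>bs\<in>lists_of_length B k. prod_list (map x bs) *\<^sub>R l (length pre + k) (pre @ bs))"
proof (induction k arbitrary: pre)
  case 0
  have "lists_of_length B 0 = {[]}" by (auto simp: lists_of_length_def)
  then show ?case by simp
next
  case (Suc k)
  let ?v = "\<Sum>b\<in>B. x b *\<^sub>R b"
  have "l (length pre + Suc k) (pre @ replicate (Suc k) ?v)
      = (\<Sum>b\<in>B. x b *\<^sub>R l (length pre + Suc k) (pre @ b # replicate k ?v))"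
    using linear_sum_scaleR_image[OF linear_bracket_slot[of pre "replicate k ?v"]] by simp
  also have "\<dots> = (\<Sum>b\<in>B. \<Sum>bs\<in>lists_of_length B k.
      (x b * prod_list (map x bs)) *\<^sub>R l (length pre + Suc k) (pre @ b # bs))"
    using Suc.IH[of "pre @ [_]"] by (simp add: scaleR_sum_right)
  also have "\<dots> = (\<Sum>(b, bs)\<in>B \<times> lists_of_length B k.
      prod_list (map x (b # bs)) *\<^sub>R l (length pre + Suc k) (pre @ b # bs))"
    by (simp add: sum.cartesian_product)
  also have "\<dots> = (\<Sum>bs\<in>lists_of_length B (Suc k). prod_list (map x bs) *\<^sub>R l (length pre + Suc k) (pre @ bs))"
    unfolding lists_of_length_Suc by (subst sum.reindex) (auto simp: inj_on_def case_prod_beta)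
  finally show ?case .
qed

lemma bracket_replicate_sum:
  "finite B \<Longrightarrow> l k (replicate k (\<Sum>b\<in>B. x b *\<^sub>R b)) =
    (\<Sum>bs\<in>lists_of_length B k. prod_list (map x bs) *\<^sub>R l k bs)"
  using bracket_replicate_sum_expand[of B "[]"] by simp

lemma bracket_head_replicate_sum:
  "finite B \<Longrightarrow> l (Suc k) (y # replicate k (\<Sum>b\<in>B. x b *\<^sub>R b)) =
    (\<Sum>bs\<in>lists_of_length B k. prod_list (map x bs) *\<^sub>R l (Suc k) (y # bs))"
  using bracket_replicate_sum_expand[of B "[y]"] by simp

lemma jacobi_replicate:
  assumes u: "u \<in> Vd 0" and n: "1 \<le> n"
  shows "(\<Sum>i\<in>{1..n}. real (n choose i) *\<^sub>R l (n - i + 1) (l i (replicate i u) # replicate (n - i) u)) = 0"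
proof -
  have "hom_list Vd (replicate n u) (replicate n 0)" using u by (simp add: hom_list_def)
  moreover have "\<forall>xs ds. hom_list Vd xs ds \<longrightarrow> length xs \<ge> 1 \<longrightarrow>
      (\<Sum>i\<in>{1..length xs}. \<Sum>\<sigma>\<in>unshuffles i (length xs). koszul_sign ds \<sigma> *\<^sub>R
         l (length xs - i + 1) (l i (take i (perm_list \<sigma> xs)) # drop i (perm_list \<sigma> xs))) = 0"
    using Linf unfolding Linf_algebra_def by blast
  ultimately have J: "(\<Sum>i\<in>{1..n}. \<Sum>\<sigma>\<in>unshuffles i n. koszul_sign (replicate n 0) \<sigma> *\<^sub>R
      l (n - i + 1) (l i (take i (perm_list \<sigma> (replicate n u))) # drop i (perm_list \<sigma> (replicate n u)))) = 0"
    using n by fastforce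
  have perm_replicate: "perm_list \<sigma> (replicate n u) = replicate n u" if "\<sigma> permutes {..<n}" for \<sigma>
  proof -
    have "map (\<lambda>i. replicate n u ! \<sigma> i) [0..<n] = map (\<lambda>i. u) [0..<n]"
      using permutes_in_image[OF that] by (intro map_cong) auto
    then show ?thesis unfolding perm_list_def by (simp add: map_replicate_const)
  qed
  have koszul_sign_0: "koszul_sign (replicate n 0) \<sigma> = 1" if "\<sigma> permutes {..<n}" for \<sigma>
  proof -
    have "{(p, q). p < q \<and> q < length (replicate n (0::int)) \<and> \<sigma> q < \<sigma> p \<and>
        odd (replicate n (0::int) ! \<sigma> p * replicate n 0 ! \<sigma> q)} = {}"
      using permutes_in_image[OF that] by auto
    then show ?thesis unfolding koszul_sign_def by (simp only: card.empty power_0)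
  qed
  have "(\<Sum>\<sigma>\<in>unshuffles i n. koszul_sign (replicate n 0) \<sigma> *\<^sub>R
      l (n - i + 1) (l i (take i (perm_list \<sigma> (replicate n u))) # drop i (perm_list \<sigma> (replicate n u))))
    = real (n choose i) *\<^sub>R l (n - i + 1) (l i (replicate i u) # replicate (n - i) u)"
    if i: "i \<in> {1..n}" for i
  proof -
    have "(\<Sum>\<sigma>\<in>unshuffles i n. koszul_sign (replicate n 0) \<sigma> *\<^sub>R
      l (n - i + 1) (l i (take i (perm_list \<sigma> (replicate n u))) # drop i (perm_list \<sigma> (replicate n u))))
      = (\<Sum>\<sigma>\<in>unshuffles i n. l (n - i + 1) (l i (replicate i u) # replicate (n - i) u))"
      using i by (intro sum.cong refl)
        (simp add: perm_replicate koszul_sign_0 unshuffles_permutes min_def)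
    then show ?thesis using i card_unshuffles[of i n] by (simp add: sum_constant_scaleR)
  qed
  then show ?thesis using J by simp
qed

lemma jacobi_replicate_fact:
  assumes u: "u \<in> Vd 0"
  shows "(\<Sum>i\<le>n. (1 / (fact i * fact (n - i))) *\<^sub>R
           l (Suc (n - i)) (l i (replicate i u) # replicate (n - i) u)) = 0"
proof (cases "n = 0")
  case True
  then show ?thesis using bracket_zero_head[of "[]"] by (simp add: bracket_Nil)
next
  case False
  let ?T = "\<lambda>i. l (Suc (n - i)) (l i (replicate i u) # replicate (n - i) u)"
  have "{..n} = insert 0 {1..n}" by auto
  moreover have "?T 0 = 0"
    using bracket_zero_head[of "replicate n u"] by (simp add: bracket_Nil)
  ultimately have "(\<Sum>i\<le>n. (1 / (fact i * fact (n - i))) *\<^sub>R ?T i)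
      = (\<Sum>i\<in>{1..n}. (1 / (fact i * fact (n - i))) *\<^sub>R ?T i)"
    by simp
  also have "\<dots> = (1 / fact n) *\<^sub>R (\<Sum>i\<in>{1..n}. real (n choose i) *\<^sub>R
           l (n - i + 1) (l i (replicate i u) # replicate (n - i) u))"
    unfolding scaleR_sum_right by (intro sum.cong refl) (simp add: binomial_fact)
  also have "\<dots> = 0" using jacobi_replicate[OF u] False by simp
  finally show ?thesis .
qed

lemma MC_eq_sum: "MC l u = (\<Sum>k<N. (1 / fact k) *\<^sub>R l k (replicate k u))"
  unfolding MC_def by (rule suminf_finite) (auto simp: bracket_eq_0_ge)

lemma bracket_replicate_in_Vd1: "u \<in> Vd 0 \<Longrightarrow> l k (replicate k u) \<in> Vd 1"
proof -
  assume "u \<in> Vd 0"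
  then have "set (replicate k u) \<subseteq> Vd 0" by (cases k) auto
  from bracket_in_Vd1[OF this] show ?thesis by simp
qed

lemma MC_in_Vd1: "u \<in> Vd 0 \<Longrightarrow> MC l u \<in> Vd 1"
  unfolding MC_eq_sum by (intro Vd_sum Vd_scaleR bracket_replicate_in_Vd1)

lemma MC_bianchi:
  assumes u: "u \<in> Vd 0"
  shows "(\<Sum>j<N. (1 / fact j) *\<^sub>R l (Suc j) (MC l u # replicate j u)) = 0"
proof -
  define g where
    "g i j = (1 / (fact i * fact j)) *\<^sub>R l (Suc j) (l i (replicate i u) # replicate j u)" for i j
  have g_outside: "g i j = 0" if "N \<le> i \<or> N \<le> j" for i j
    using that bracket_zero_head[of "replicate j u"] by (auto simp: g_def bracket_eq_0_ge)
  have "(1 / fact j) *\<^sub>R l (Suc j) (MC l u # replicate j u) = (\<Sum>i<N. g i j)" for j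
  proof -
    have lin: "linear (\<lambda>z. l (Suc j) (z # replicate j u))"
      using linear_bracket_head[of "replicate j u"] by simp
    show ?thesis unfolding MC_eq_sum linear_sum[OF lin] linear_scale[OF lin]
      by (simp add: g_def scaleR_sum_right mult.commute)
  qed
  then have "(\<Sum>j<N. (1 / fact j) *\<^sub>R l (Suc j) (MC l u # replicate j u)) = (\<Sum>j<N. \<Sum>i<N. g i j)"
    by simp
  also have "\<dots> = (\<Sum>i<N. \<Sum>j<N. g i j)"
    by (rule sum.swap)
  also have "\<dots> = (\<Sum>(i, j)\<in>{..<N} \<times> {..<N}. g i j)"
    by (rule sum.cartesian_product)
  also have "\<dots> = (\<Sum>(i, j)\<in>{(i, j). i + j \<le> 2 * N}. g i j)"
  proof (rule sum.mono_neutral_left)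
    show "finite {(i, j). i + j \<le> 2 * N}"
      by (rule finite_subset[of _ "{..2 * N} \<times> {..2 * N}"]) auto
    show "{..<N} \<times> {..<N} \<subseteq> {(i, j). i + j \<le> 2 * N}" by auto
    show "\<forall>x\<in>{(i, j). i + j \<le> 2 * N} - {..<N} \<times> {..<N}. (case x of (i, j) \<Rightarrow> g i j) = 0"
      using g_outside by (auto simp: not_less[symmetric])
  qed
  also have "\<dots> = (\<Sum>n\<le>2 * N. \<Sum>i\<le>n. g i (n - i))"
    by (rule sum.triangle_reindex_eq)
  also have "\<dots> = 0"
    using jacobi_replicate_fact[OF u] by (simp add: g_def)
  finally show ?thesis .
qed

definition MC_nonlinear :: "'v \<Rightarrow> 'v" where
  "MC_nonlinear u = (\<Sum>k\<in>{2..<N}. (1 / fact k) *\<^sub>R l k (replicate k u))"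

lemma MC_nonlinear_in_Vd1: "u \<in> Vd 0 \<Longrightarrow> MC_nonlinear u \<in> Vd 1"
  unfolding MC_nonlinear_def by (intro Vd_sum Vd_scaleR bracket_replicate_in_Vd1)

lemma MC_eq_linear_plus_nonlinear: "MC l u = l 1 [u] + MC_nonlinear u"
proof (cases "2 \<le> N")
  case True
  then have "{..<N} = insert 0 (insert 1 {2..<N})" by auto
  then show ?thesis unfolding MC_eq_sum MC_nonlinear_def by (simp add: bracket_Nil)
next
  case False
  have "(1 / fact k) *\<^sub>R l k (replicate k u) = 0" if "k < N" for k
  proof -
    have "k = 0" using False that by simp
    then show ?thesis by (simp add: bracket_Nil)
  qed
  moreover have "l 1 [u] = 0" "{2..<N} = {}"
    using False bracket_eq_0_ge[of 1] by auto
  ultimately show ?thesis unfolding MC_eq_sum MC_nonlinear_def by simp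
qed

lemma bracket_1_bracket_1: "u \<in> Vd 0 \<Longrightarrow> l 1 [l 1 [u]] = 0"
  using jacobi_replicate[of u 1] by simp

lemma bracket_1_MC:
  assumes "u \<in> Vd 0"
  shows "l 1 [MC l u] = - (\<Sum>j\<in>{1..<N}. (1 / fact j) *\<^sub>R l (Suc j) (MC l u # replicate j u))"
proof (cases "N = 0")
  case True
  then show ?thesis using bracket_eq_0_ge[of 1] by simp
next
  case False
  then have "{..<N} = insert 0 {1..<N}" by auto
  then show ?thesis using MC_bianchi[OF assms] by (simp add: eq_neg_iff_add_eq_0)
qed

end

section \<open>Coordinate norms\<close>

lemma finite_independent_spanning_subset:
  fixes B :: "'a::real_vector set"
  assumes "finite B"
  obtains C where "independent C" "finite C" "span C = span B"
proof -
  obtain C where C: "C \<subseteq> span B" "independent C" "span B \<subseteq> span C"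
    using real_vector.maximal_independent_subset[of "span B"] by blast
  have "span C = span B"
    using C real_vector.span_minimal[OF C(1) real_vector.subspace_span] by auto
  moreover have "finite C"
    using real_vector.independent_span_bound[OF assms C(2) C(1)] by auto
  ultimately show ?thesis using C(2) that by blast
qed

definition coord_norm :: "'a::real_vector set \<Rightarrow> 'a \<Rightarrow> real" where
  "coord_norm C y = (\<Sum>c\<in>C. \<bar>real_vector.representation C y c\<bar>)"

lemma coord_norm_nonneg: "0 \<le> coord_norm C y"
  unfolding coord_norm_def by (intro sum_nonneg) auto

context
  fixes C :: "'a::real_vector set"
  assumes C: "independent C" "finite C"
begin

lemma coord_norm_eq_0_iff: "y \<in> span C \<Longrightarrow> coord_norm C y = 0 \<longleftrightarrow> y = 0"
  using real_vector.sum_representation_eq[OF C(1) _ C(2) subset_refl, of y]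
  by (auto simp: coord_norm_def sum_nonneg_eq_0_iff[OF C(2)] real_vector.representation_zero)

lemma coord_norm_add_le:
  "y \<in> span C \<Longrightarrow> z \<in> span C \<Longrightarrow> coord_norm C (y + z) \<le> coord_norm C y + coord_norm C z"
  unfolding coord_norm_def sum.distrib[symmetric]
  by (simp add: real_vector.representation_add[OF C(1)] sum_mono abs_triangle_ineq)

lemma coord_norm_scaleR: "y \<in> span C \<Longrightarrow> coord_norm C (a *\<^sub>R y) = \<bar>a\<bar> * coord_norm C y"
  unfolding coord_norm_def
  by (simp add: real_vector.representation_scale[OF C(1)] abs_mult sum_distrib_left)

lemma coord_norm_uminus: "y \<in> span C \<Longrightarrow> coord_norm C (- y) = coord_norm C y"
  using coord_norm_scaleR[of y "-1"] by simp

lemma coord_norm_sum_le: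
  "(\<And>i. i \<in> I \<Longrightarrow> y i \<in> span C) \<Longrightarrow> coord_norm C (\<Sum>i\<in>I. y i) \<le> (\<Sum>i\<in>I. coord_norm C (y i))"
proof (induction I rule: infinite_finite_induct)
  case (insert i I)
  then have "coord_norm C (y i + sum y I) \<le> coord_norm C (y i) + coord_norm C (sum y I)"
    by (intro coord_norm_add_le) (auto intro: real_vector.span_sum)
  with insert show ?case by simp
qed (simp_all add: coord_norm_def real_vector.representation_zero)

lemma coord_norm_linear_le:
  assumes f: "linear f" "f ` span C \<subseteq> span C" and y: "y \<in> span C"
  shows "coord_norm C (f y) \<le> (\<Sum>c\<in>C. coord_norm C (f c)) * coord_norm C y"
proof -
  let ?r = "real_vector.representation C y"
  have fc: "f c \<in> span C" if "c \<in> C" for c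
    using f(2) that by (auto intro: real_vector.span_base)
  have "f y = (\<Sum>c\<in>C. ?r c *\<^sub>R f c)"
    using real_vector.sum_representation_eq[OF C(1) y C(2) subset_refl]
    by (metis linear_sum_scaleR_image[OF f(1)])
  then have "coord_norm C (f y) \<le> (\<Sum>c\<in>C. \<bar>?r c\<bar> * coord_norm C (f c))"
    using fc by (auto intro!: order_trans[OF coord_norm_sum_le] sum_mono
        simp: coord_norm_scaleR real_vector.span_scale)
  also have "\<dots> \<le> (\<Sum>c\<in>C. coord_norm C y * coord_norm C (f c))"
    using C(2) by (intro sum_mono mult_right_mono) (auto simp: coord_norm_def coord_norm_nonneg
        intro: member_le_sum)
  finally show ?thesis by (simp add: sum_distrib_left mult.commute)
qed

lemma linear_coord_contraction_fixed_point:
  assumes f: "linear f" "f ` span C \<subseteq> span C" and small: "(\<Sum>c\<in>C. coord_norm C (f c)) < 1"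
    and y: "y \<in> span C" "f y = y"
  shows "y = 0"
proof -
  have "coord_norm C y \<le> (\<Sum>c\<in>C. coord_norm C (f c)) * coord_norm C y"
    using coord_norm_linear_le[OF f y(1)] y(2) by simp
  then have "coord_norm C y = 0"
    using small coord_norm_nonneg[of C y] by (metis antisym mult_le_cancel_right1 not_le)
  then show ?thesis using coord_norm_eq_0_iff[OF y(1)] by simp
qed

end

section \<open>Weighted norms and evaluation of formal power series\<close>

lemma fps_X_power_dvd_iff: "fps_X ^ k dvd (f :: 'a::comm_ring_1 fps) \<longleftrightarrow> (\<forall>i<k. fps_nth f i = 0)"
proof
  assume "fps_X ^ k dvd f"
  then show "\<forall>i<k. fps_nth f i = 0" by (auto simp: dvd_def fps_X_power_mult_nth)
next
  assume "\<forall>i<k. fps_nth f i = 0"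
  then have "f = fps_X ^ k * fps_shift k f"
    by (intro fps_ext) (auto simp: fps_X_power_mult_nth)
  then show "fps_X ^ k dvd f" by (metis dvd_triv_left)
qed

lemma power_dvd_prod_list:
  "(\<And>b. b \<in> set bs \<Longrightarrow> d dvd F b) \<Longrightarrow> d ^ length bs dvd prod_list (map F bs)"
  for d :: "'a::comm_monoid_mult"
  by (induction bs) (auto intro: mult_dvd_mono)

lemma power_dvd_prod_list_diff:
  fixes d :: "'a::comm_ring_1"
  assumes "bs \<noteq> []"
    and "\<And>b. b \<in> set bs \<Longrightarrow> d dvd F b" "\<And>b. b \<in> set bs \<Longrightarrow> d dvd G b"
    and "\<And>b. b \<in> set bs \<Longrightarrow> d ^ p dvd F b - G b"
  shows "d ^ (p + length bs - 1) dvd prod_list (map F bs) - prod_list (map G bs)"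
  using assms
proof (induction bs)
  case (Cons b bs)
  show ?case
  proof (cases "bs = []")
    case True
    then show ?thesis using Cons.prems by simp
  next
    case False
    have IH: "d ^ (p + length bs - 1) dvd prod_list (map F bs) - prod_list (map G bs)"
      using Cons False by simp
    have "prod_list (map F (b # bs)) - prod_list (map G (b # bs)) =
       F b * (prod_list (map F bs) - prod_list (map G bs)) + (F b - G b) * prod_list (map G bs)"
      by (simp add: algebra_simps)
    moreover have "d ^ (p + length (b # bs) - 1) = d * d ^ (p + length bs - 1)"
      using False by (cases bs) auto
    moreover have "d ^ (p + length (b # bs) - 1) = d ^ p * d ^ length bs"
      by (simp add: power_add)
    ultimately show ?thesis
      using IH Cons.prems power_dvd_prod_list[of bs d G]
      by (metis dvd_add list.set_intros mult_dvd_mono)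
  qed
qed simp

definition fps_wnorm :: "nat \<Rightarrow> real \<Rightarrow> real fps \<Rightarrow> real" where
  "fps_wnorm P r f = (\<Sum>n\<le>P. \<bar>fps_nth f n\<bar> * r ^ n)"

context
  fixes r :: real
  assumes r: "0 \<le> r"
begin

lemma fps_wnorm_nonneg: "0 \<le> fps_wnorm P r f"
  unfolding fps_wnorm_def using r by (intro sum_nonneg) auto

lemma fps_wnorm_add: "fps_wnorm P r (f + g) \<le> fps_wnorm P r f + fps_wnorm P r g"
  unfolding fps_wnorm_def sum.distrib[symmetric] using r
  by (intro sum_mono) (auto simp: distrib_right[symmetric] intro!: mult_right_mono abs_triangle_ineq)

lemma fps_wnorm_diff: "fps_wnorm P r (f - g) \<le> fps_wnorm P r f + fps_wnorm P r g"
  unfolding fps_wnorm_def sum.distrib[symmetric] using r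
  by (intro sum_mono) (auto simp: distrib_right[symmetric] intro!: mult_right_mono abs_triangle_ineq4)

lemma fps_wnorm_sum: "fps_wnorm P r (sum f I) \<le> (\<Sum>i\<in>I. fps_wnorm P r (f i))"
proof (induction I rule: infinite_finite_induct)
  case (insert x F)
  then show ?case using fps_wnorm_add[of P "f x" "sum f F"] by simp
qed (simp_all add: fps_wnorm_def)

lemma fps_wnorm_const_mult: "fps_wnorm P r (fps_const c * f) = \<bar>c\<bar> * fps_wnorm P r f"
  unfolding fps_wnorm_def by (simp add: sum_distrib_left abs_mult mult.assoc)

lemma fps_wnorm_1: "fps_wnorm P r 1 = 1"
proof -
  have "fps_wnorm P r 1 = (\<Sum>n\<le>P. if n = 0 then 1 else 0)"
    unfolding fps_wnorm_def by (intro sum.cong) (auto simp: fps_one_nth)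
  then show ?thesis by (simp add: sum.delta)
qed

lemma fps_wnorm_const_mult_X: "fps_wnorm P r (fps_const c * fps_X) \<le> \<bar>c\<bar> * r"
proof -
  have "fps_wnorm P r (fps_const c * fps_X) = (\<Sum>n\<le>P. if n = 1 then \<bar>c\<bar> * r else 0)"
    unfolding fps_wnorm_def by (intro sum.cong) (auto simp: fps_X_def)
  then show ?thesis using r by (simp add: sum.delta)
qed

lemma fps_wnorm_mult: "fps_wnorm P r (f * g) \<le> fps_wnorm P r f * fps_wnorm P r g"
proof -
  let ?a = "\<lambda>f i. \<bar>fps_nth f i\<bar> * r ^ i"
  have "fps_wnorm P r (f * g) \<le> (\<Sum>n\<le>P. \<Sum>i\<le>n. ?a f i * ?a g (n - i))"
    unfolding fps_wnorm_def fps_mult_nth atLeast0AtMost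
  proof (intro sum_mono)
    fix n
    have "\<bar>\<Sum>i\<le>n. fps_nth f i * fps_nth g (n - i)\<bar> * r ^ n \<le> (\<Sum>i\<le>n. \<bar>fps_nth f i * fps_nth g (n - i)\<bar>) * r ^ n"
      using r by (intro mult_right_mono sum_abs) auto
    also have "\<dots> = (\<Sum>i\<le>n. ?a f i * ?a g (n - i))"
      unfolding sum_distrib_right
      by (intro sum.cong refl) (simp add: abs_mult power_add[symmetric])
    finally show "\<bar>\<Sum>i\<le>n. fps_nth f i * fps_nth g (n - i)\<bar> * r ^ n \<le> (\<Sum>i\<le>n. ?a f i * ?a g (n - i))" .
  qed
  also have "\<dots> = (\<Sum>(i, j)\<in>{(i, j). i + j \<le> P}. ?a f i * ?a g j)"
    by (rule sum.triangle_reindex_eq[symmetric])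
  also have "\<dots> \<le> (\<Sum>(i, j)\<in>{..P} \<times> {..P}. ?a f i * ?a g j)"
    using r by (intro sum_mono2) auto
  also have "\<dots> = fps_wnorm P r f * fps_wnorm P r g"
    unfolding fps_wnorm_def sum_product sum.cartesian_product by simp
  finally show ?thesis .
qed

lemma fps_wnorm_prod_list:
  assumes "\<And>b. b \<in> set bs \<Longrightarrow> fps_wnorm P r (F b) \<le> \<rho>"
  shows "fps_wnorm P r (prod_list (map F bs)) \<le> \<rho> ^ length bs"
  using assms
proof (induction bs)
  case (Cons b bs)
  have "0 \<le> \<rho>" using Cons.prems[of b] fps_wnorm_nonneg[of P "F b"] by simp
  have "fps_wnorm P r (prod_list (map F (b # bs))) \<le> fps_wnorm P r (F b) * fps_wnorm P r (prod_list (map F bs))"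
    using fps_wnorm_mult by simp
  also have "\<dots> \<le> \<rho> * \<rho> ^ length bs"
    using Cons fps_wnorm_nonneg \<open>0 \<le> \<rho>\<close> by (intro mult_mono) auto
  finally show ?case by simp
qed (simp add: fps_wnorm_1)

end

lemma fps_wnorm_bounded_convergent:
  assumes r: "0 \<le> r" and bound: "\<And>P. fps_wnorm P r f \<le> \<rho>"
  shows "ereal r \<le> fps_conv_radius f" and "\<bar>s\<bar> \<le> r \<Longrightarrow> \<bar>eval_fps f s\<bar> \<le> \<rho>"
proof -
  let ?a = "\<lambda>n. \<bar>fps_nth f n\<bar> * r ^ n"
  have sa: "summable ?a"
    by (rule bounded_imp_summable[of _ \<rho>]) (use r bound in \<open>auto simp: fps_wnorm_def\<close>)
  have "summable (\<lambda>n. fps_nth f n * r ^ n)"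
    by (rule summable_rabs_cancel) (use sa r in \<open>simp add: abs_mult\<close>)
  from conv_radius_geI[OF this] show "ereal r \<le> fps_conv_radius f"
    unfolding fps_conv_radius_def using r by simp
  assume s: "\<bar>s\<bar> \<le> r"
  have le: "\<bar>fps_nth f n * s ^ n\<bar> \<le> ?a n" for n
    using s by (simp add: abs_mult power_abs mult_left_mono power_mono)
  have sabs: "summable (\<lambda>n. \<bar>fps_nth f n * s ^ n\<bar>)"
    by (rule summable_comparison_test'[OF sa]) (use le in simp)
  have "\<bar>eval_fps f s\<bar> \<le> (\<Sum>n. \<bar>fps_nth f n * s ^ n\<bar>)"
    unfolding eval_fps_def by (rule summable_rabs[OF sabs])
  also have "\<dots> \<le> suminf ?a" by (rule suminf_le[OF le sabs sa])
  also have "\<dots> \<le> \<rho>"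
  proof (rule suminf_le_const[OF sa])
    fix n
    show "sum ?a {..<n} \<le> \<rho>"
    proof (cases n)
      case 0 then show ?thesis using bound[of 0] fps_wnorm_nonneg[OF r, of 0 f] by simp
    next
      case (Suc m)
      then show ?thesis using bound[of m] by (simp add: fps_wnorm_def lessThan_Suc_atMost)
    qed
  qed
  finally show "\<bar>eval_fps f s\<bar> \<le> \<rho>" .
qed

context
  fixes s :: "'a :: {banach, real_normed_div_algebra, comm_ring_1}"
begin

lemma fps_conv_radius_mult_gt:
  "ereal (norm s) < fps_conv_radius f \<Longrightarrow> ereal (norm s) < fps_conv_radius g \<Longrightarrow>
    ereal (norm s) < fps_conv_radius (f * g)"
  using fps_conv_radius_mult[of f g] by (metis less_le_trans min_less_iff_conj)

lemma fps_conv_radius_sum_gt: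
  "(\<And>i. i \<in> I \<Longrightarrow> ereal (norm s) < fps_conv_radius (f i)) \<Longrightarrow>
    ereal (norm s) < fps_conv_radius (sum f I)"
proof (induction I rule: infinite_finite_induct)
  case (insert i I)
  have "ereal (norm s) < min (fps_conv_radius (f i)) (fps_conv_radius (sum f I))"
    using insert by simp
  also have "\<dots> \<le> fps_conv_radius (f i + sum f I)" by (rule fps_conv_radius_add)
  finally show ?case using insert.hyps by simp
qed simp_all

lemma eval_fps_sum:
  "(\<And>i. i \<in> I \<Longrightarrow> ereal (norm s) < fps_conv_radius (f i)) \<Longrightarrow>
    eval_fps (sum f I) s = (\<Sum>i\<in>I. eval_fps (f i) s)"
proof (induction I rule: infinite_finite_induct)
  case (insert i I)
  then show ?case by (simp add: eval_fps_add fps_conv_radius_sum_gt)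
qed simp_all

lemma fps_conv_radius_prod_list_gt:
  "(\<And>b. b \<in> set bs \<Longrightarrow> ereal (norm s) < fps_conv_radius (F b)) \<Longrightarrow>
    ereal (norm s) < fps_conv_radius (prod_list (map F bs))"
  by (induction bs) (simp_all add: fps_conv_radius_mult_gt)

lemma eval_fps_prod_list:
  "(\<And>b. b \<in> set bs \<Longrightarrow> ereal (norm s) < fps_conv_radius (F b)) \<Longrightarrow>
    eval_fps (prod_list (map F bs)) s = prod_list (map (\<lambda>b. eval_fps (F b) s) bs)"
  by (induction bs) (simp_all add: eval_fps_mult fps_conv_radius_prod_list_gt)

end

section \<open>A polynomial fixed-point system of formal power series\<close>

locale fps_fixed_point_system =
  fixes B :: "'b set" and N :: nat and \<gamma> :: "'b \<Rightarrow> real" and T :: "nat \<Rightarrow> 'b list \<Rightarrow> 'b \<Rightarrow> real"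
  assumes finite_B: "finite B"
begin

definition nonlinear :: "('b \<Rightarrow> real fps) \<Rightarrow> 'b \<Rightarrow> real fps" where
  "nonlinear F b = (\<Sum>k\<in>{2..<N}. \<Sum>bs\<in>lists_of_length B k. fps_const (T k bs b) * prod_list (map F bs))"

definition step :: "('b \<Rightarrow> real fps) \<Rightarrow> 'b \<Rightarrow> real fps" where
  "step F b = fps_const (\<gamma> b) * fps_X - nonlinear F b"

lemma fps_X_power_2_dvd_nonlinear:
  assumes "\<And>b. b \<in> B \<Longrightarrow> fps_X dvd F b"
  shows "fps_X ^ 2 dvd nonlinear F b"
  unfolding nonlinear_def
proof (intro dvd_sum)
  fix k bs assume k: "k \<in> {2..<N}" and bs: "bs \<in> lists_of_length B k"
  have "fps_X ^ k dvd prod_list (map F bs)"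
    using power_dvd_prod_list[of bs fps_X F] assms bs by (auto simp: lists_of_length_def)
  moreover have "(fps_X :: real fps) ^ 2 dvd fps_X ^ k" using k by (intro le_imp_power_dvd) auto
  ultimately show "fps_X ^ 2 dvd fps_const (T k bs b) * prod_list (map F bs)"
    by (meson dvd_trans dvd_mult)
qed

lemma fps_X_dvd_step:
  assumes "\<And>b. b \<in> B \<Longrightarrow> fps_X dvd F b"
  shows "fps_X dvd step F b"
proof -
  have "fps_X dvd (fps_X :: real fps) ^ 2" by (simp add: power2_eq_square)
  then have "fps_X dvd nonlinear F b"
    using fps_X_power_2_dvd_nonlinear[OF assms] by (rule dvd_trans)
  then show ?thesis unfolding step_def by (intro dvd_diff) simp_all
qed

text \<open>Since the nonlinear part is at least quadratic, step is a contraction for the X-adic topology.\<close>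

lemma step_diff_dvd:
  assumes "\<And>b. b \<in> B \<Longrightarrow> fps_X dvd F b" "\<And>b. b \<in> B \<Longrightarrow> fps_X dvd G b"
    and "\<And>b. b \<in> B \<Longrightarrow> fps_X ^ p dvd F b - G b"
  shows "fps_X ^ Suc p dvd step F b - step G b"
proof -
  have "step F b - step G b = (\<Sum>k\<in>{2..<N}. \<Sum>bs\<in>lists_of_length B k.
      fps_const (T k bs b) * (prod_list (map G bs) - prod_list (map F bs)))"
    unfolding step_def nonlinear_def by (simp add: right_diff_distrib sum_subtractf)
  also have "fps_X ^ Suc p dvd \<dots>"
  proof (intro dvd_sum)
    fix k bs assume k: "k \<in> {2..<N}" and bs: "bs \<in> lists_of_length B k"
    then have "fps_X ^ (p + length bs - 1) dvd prod_list (map G bs) - prod_list (map F bs)"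
      using assms by (intro power_dvd_prod_list_diff)
        (auto simp: lists_of_length_def dvd_diff_commute)
    moreover have "(fps_X :: real fps) ^ Suc p dvd fps_X ^ (p + length bs - 1)"
      using k bs by (intro le_imp_power_dvd) (auto simp: lists_of_length_def)
    ultimately show "fps_X ^ Suc p dvd fps_const (T k bs b) * (prod_list (map G bs) - prod_list (map F bs))"
      by (meson dvd_trans dvd_mult)
  qed
  finally show ?thesis .
qed

primrec iterate :: "nat \<Rightarrow> 'b \<Rightarrow> real fps" where
  "iterate 0 = (\<lambda>b. 0)"
| "iterate (Suc p) = step (iterate p)"

lemma fps_X_dvd_iterate: "b \<in> B \<Longrightarrow> fps_X dvd iterate p b"
  by (induction p arbitrary: b) (simp_all add: fps_X_dvd_step)

lemma iterate_diff_dvd: "p \<le> q \<Longrightarrow> b \<in> B \<Longrightarrow> fps_X ^ p dvd iterate q b - iterate p b"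
proof (induction p arbitrary: q b)
  case (Suc p)
  then obtain q' where q: "q = Suc q'" "p \<le> q'" by (cases q) auto
  show ?case
    unfolding q iterate.simps using Suc.IH[OF q(2)]
    by (intro step_diff_dvd) (simp_all add: fps_X_dvd_iterate del: iterate.simps)
qed simp

text \<open>The n-th coefficient of iterate p does not depend on p > n.\<close>

definition solution :: "'b \<Rightarrow> real fps" where
  "solution b = Abs_fps (\<lambda>n. fps_nth (iterate (Suc n) b) n)"

lemma solution_nth: "b \<in> B \<Longrightarrow> n \<le> P \<Longrightarrow> fps_nth (solution b) n = fps_nth (iterate (Suc P) b) n"
  using iterate_diff_dvd[of "Suc n" "Suc P" b] unfolding fps_X_power_dvd_iff
  by (simp add: solution_def del: iterate.simps)

lemma solution_diff_dvd: "b \<in> B \<Longrightarrow> fps_X ^ Suc P dvd solution b - iterate (Suc P) b"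
  unfolding fps_X_power_dvd_iff by (simp add: solution_nth del: iterate.simps)

lemma fps_X_dvd_solution: "b \<in> B \<Longrightarrow> fps_X dvd solution b"
proof -
  assume b: "b \<in> B"
  have "fps_nth (iterate 1 b) 0 = 0"
    using fps_X_dvd_iterate[OF b, of 1] fps_X_power_dvd_iff[of 1 "iterate 1 b"] by simp
  then have "fps_X ^ 1 dvd solution b"
    unfolding fps_X_power_dvd_iff using solution_nth[OF b, of 0 0] by simp
  then show ?thesis by simp
qed

lemma step_solution: "b \<in> B \<Longrightarrow> step solution b = solution b"
proof (rule fps_ext)
  fix n assume b: "b \<in> B"
  have "fps_X ^ Suc (Suc n) dvd step solution b - step (iterate (Suc n)) b"
    using solution_diff_dvd fps_X_dvd_solution fps_X_dvd_iterate
    by (intro step_diff_dvd) (simp_all del: iterate.simps)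
  then have "fps_nth (step solution b) n = fps_nth (iterate (Suc (Suc n)) b) n"
    unfolding fps_X_power_dvd_iff by simp
  also have "\<dots> = fps_nth (solution b) n" using solution_nth[OF b, of n "Suc n"] by simp
  finally show "fps_nth (step solution b) n = fps_nth (solution b) n" .
qed

lemma solution_nth_0: "b \<in> B \<Longrightarrow> fps_nth (solution b) 0 = 0"
  using fps_X_dvd_solution[of b] fps_X_power_dvd_iff[of 1 "solution b"] by simp

lemma solution_nth_1: "b \<in> B \<Longrightarrow> fps_nth (solution b) 1 = \<gamma> b"
proof -
  assume b: "b \<in> B"
  have "fps_nth (nonlinear solution b) 1 = 0"
    using fps_X_power_2_dvd_nonlinear[of solution b] fps_X_dvd_solution
    by (simp add: fps_X_power_dvd_iff)
  then have "fps_nth (step solution b) 1 = \<gamma> b" unfolding step_def by (simp add: fps_X_def)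
  then show ?thesis using step_solution[OF b] by simp
qed

definition lin_size :: real where
  "lin_size = (\<Sum>b\<in>B. \<bar>\<gamma> b\<bar>)"

definition nonlin_size :: real where
  "nonlin_size = (\<Sum>b\<in>B. \<Sum>k\<in>{2..<N}. \<Sum>bs\<in>lists_of_length B k. \<bar>T k bs b\<bar>)"

lemma lin_size_nonneg: "0 \<le> lin_size"
  unfolding lin_size_def by (intro sum_nonneg) auto

lemma nonlin_size_nonneg: "0 \<le> nonlin_size"
  unfolding nonlin_size_def by (intro sum_nonneg) auto

context
  fixes r \<rho> :: real
  assumes r: "0 \<le> r" and \<rho>: "0 \<le> \<rho>" "\<rho> \<le> 1"
    and majorant: "lin_size * r + nonlin_size * \<rho>\<^sup>2 \<le> \<rho>"
begin

lemma fps_wnorm_nonlinear: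
  assumes "\<And>b. b \<in> B \<Longrightarrow> fps_wnorm P r (F b) \<le> \<rho>"
  shows "fps_wnorm P r (nonlinear F b) \<le> (\<Sum>k\<in>{2..<N}. \<Sum>bs\<in>lists_of_length B k. \<bar>T k bs b\<bar>) * \<rho>\<^sup>2"
proof -
  have "fps_wnorm P r (nonlinear F b)
      \<le> (\<Sum>k\<in>{2..<N}. \<Sum>bs\<in>lists_of_length B k. fps_wnorm P r (fps_const (T k bs b) * prod_list (map F bs)))"
    unfolding nonlinear_def
    by (rule order_trans[OF fps_wnorm_sum[OF r]]) (intro sum_mono fps_wnorm_sum[OF r])
  also have "\<dots> \<le> (\<Sum>k\<in>{2..<N}. \<Sum>bs\<in>lists_of_length B k. \<bar>T k bs b\<bar> * \<rho>\<^sup>2)"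
  proof (intro sum_mono)
    fix k bs assume k: "k \<in> {2..<N}" and bs: "bs \<in> lists_of_length B k"
    have "fps_wnorm P r (prod_list (map F bs)) \<le> \<rho> ^ length bs"
      using bs assms by (intro fps_wnorm_prod_list[OF r]) (auto simp: lists_of_length_def)
    also have "\<dots> \<le> \<rho>\<^sup>2" using k bs \<rho> by (intro power_decreasing) (auto simp: lists_of_length_def)
    finally show "fps_wnorm P r (fps_const (T k bs b) * prod_list (map F bs)) \<le> \<bar>T k bs b\<bar> * \<rho>\<^sup>2"
      unfolding fps_wnorm_const_mult[OF r] by (intro mult_left_mono) auto
  qed
  finally show ?thesis by (simp add: sum_distrib_right)
qed

lemma fps_wnorm_step:
  assumes b: "b \<in> B" and F: "\<And>b. b \<in> B \<Longrightarrow> fps_wnorm P r (F b) \<le> \<rho>"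
  shows "fps_wnorm P r (step F b) \<le> \<rho>"
proof -
  have "fps_wnorm P r (step F b) \<le> \<bar>\<gamma> b\<bar> * r +
      (\<Sum>k\<in>{2..<N}. \<Sum>bs\<in>lists_of_length B k. \<bar>T k bs b\<bar>) * \<rho>\<^sup>2"
    unfolding step_def
    by (rule order_trans[OF fps_wnorm_diff[OF r]] add_mono fps_wnorm_const_mult_X[OF r]
        fps_wnorm_nonlinear F)+
  also have "\<dots> \<le> lin_size * r + nonlin_size * \<rho>\<^sup>2"
    unfolding lin_size_def nonlin_size_def using b finite_B r
    by (intro add_mono mult_right_mono member_le_sum[of b B] sum_nonneg) auto
  finally show ?thesis using majorant by simp
qed

lemma fps_wnorm_iterate: "b \<in> B \<Longrightarrow> fps_wnorm P r (iterate p b) \<le> \<rho>"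
proof (induction p arbitrary: b)
  case 0
  then show ?case using \<rho> by (simp add: fps_wnorm_def)
next
  case (Suc p)
  then show ?case by (simp add: fps_wnorm_step)
qed

lemma fps_wnorm_solution: "b \<in> B \<Longrightarrow> fps_wnorm P r (solution b) \<le> \<rho>"
proof -
  assume b: "b \<in> B"
  have "fps_wnorm P r (solution b) = fps_wnorm P r (iterate (Suc P) b)"
    unfolding fps_wnorm_def by (intro sum.cong) (auto simp: solution_nth[OF b] simp del: iterate.simps)
  then show ?thesis using fps_wnorm_iterate[OF b] by (simp del: iterate.simps)
qed

lemma fps_conv_radius_solution: "b \<in> B \<Longrightarrow> ereal r \<le> fps_conv_radius (solution b)"
  using fps_wnorm_bounded_convergent(1)[OF r fps_wnorm_solution] .

lemma abs_eval_solution_le: "b \<in> B \<Longrightarrow> \<bar>s\<bar> \<le> r \<Longrightarrow> \<bar>eval_fps (solution b) s\<bar> \<le> \<rho>"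
  using fps_wnorm_bounded_convergent(2)[OF r fps_wnorm_solution] .

end

lemma eval_step:
  assumes F: "\<And>b. b \<in> B \<Longrightarrow> ereal \<bar>s\<bar> < fps_conv_radius (F b)"
  shows "eval_fps (step F b) s = \<gamma> b * s -
     (\<Sum>k\<in>{2..<N}. \<Sum>bs\<in>lists_of_length B k. T k bs b * prod_list (map (\<lambda>b. eval_fps (F b) s) bs))"
proof -
  let ?t = "\<lambda>k bs. fps_const (T k bs b) * prod_list (map F bs)"
  have t: "ereal \<bar>s\<bar> < fps_conv_radius (?t k bs)"
    "eval_fps (?t k bs) s = T k bs b * prod_list (map (\<lambda>b. eval_fps (F b) s) bs)"
    if "bs \<in> lists_of_length B k" for bs k
  proof -
    have "\<And>b. b \<in> set bs \<Longrightarrow> ereal (norm s) < fps_conv_radius (F b)"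
      using that F by (auto simp: lists_of_length_def)
    then have prod: "ereal (norm s) < fps_conv_radius (prod_list (map F bs))"
      "eval_fps (prod_list (map F bs)) s = prod_list (map (\<lambda>b. eval_fps (F b) s) bs)"
      by (fact fps_conv_radius_prod_list_gt, fact eval_fps_prod_list)
    show "ereal \<bar>s\<bar> < fps_conv_radius (?t k bs)"
      using fps_conv_radius_mult_gt[of s _ "prod_list (map F bs)"] prod(1) by simp
    show "eval_fps (?t k bs) s = T k bs b * prod_list (map (\<lambda>b. eval_fps (F b) s) bs)"
      using prod by (simp add: eval_fps_mult)
  qed
  note radius_sum = fps_conv_radius_sum_gt[where 'a=real, unfolded real_norm_def]
  note eval_sum = eval_fps_sum[where 'a=real, unfolded real_norm_def]
  have inner: "ereal \<bar>s\<bar> < fps_conv_radius (\<Sum>bs\<in>lists_of_length B k. ?t k bs)" for k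
    by (rule radius_sum) (erule t(1))
  have "ereal \<bar>s\<bar> < fps_conv_radius (nonlinear F b)"
    unfolding nonlinear_def by (rule radius_sum) (rule inner)
  moreover have "eval_fps (nonlinear F b) s =
      (\<Sum>k\<in>{2..<N}. \<Sum>bs\<in>lists_of_length B k. T k bs b * prod_list (map (\<lambda>b. eval_fps (F b) s) bs))"
    unfolding nonlinear_def by (simp add: eval_sum inner t)
  moreover have "ereal \<bar>s\<bar> < fps_conv_radius (fps_const (\<gamma> b) * fps_X)"
    using fps_conv_radius_mult[of "fps_const (\<gamma> b)" fps_X] by simp
  ultimately show ?thesis
    unfolding step_def by (simp add: eval_fps_diff eval_fps_mult)
qed

end

section \<open>The Kuranishi construction\<close>

lemma abs_prod_list_le:
  fixes x :: "'b \<Rightarrow> 'a::linordered_idom"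
  assumes "\<And>b. b \<in> set bs \<Longrightarrow> \<bar>x b\<bar> \<le> \<rho>"
  shows "\<bar>prod_list (map x bs)\<bar> \<le> \<rho> ^ length bs"
  using assms
proof (induction bs)
  case (Cons b bs)
  then have "\<bar>x b\<bar> * \<bar>prod_list (map x bs)\<bar> \<le> \<rho> * \<rho> ^ length bs"
    by (intro mult_mono) (auto intro: order_trans[OF abs_ge_zero])
  then show ?case by (simp add: abs_mult)
qed simp

locale Linf_homotopy = strict_Linf_algebra Vd l N
  for Vd :: "int \<Rightarrow> 'v::real_normed_vector set" and l N +
  fixes h1 h2 :: "'v \<Rightarrow> 'v"
  assumes h1: "linear h1" "h1 ` Vd 1 \<subseteq> Vd 0"
    and h2: "linear h2" "h2 ` Vd 2 \<subseteq> Vd 1"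
    and homotopy: "\<forall>x\<in>Vd 1. l 1 [h1 x] + h2 (l 1 [x]) = x"
begin

lemma MC_eq_h2_bracket_1_MC:
  assumes u: "u \<in> Vd 0" and u1: "l 1 [u1] = 0"
    and kuranishi: "u = s *\<^sub>R u1 - h1 (MC_nonlinear u)"
  shows "MC l u = h2 (l 1 [MC l u])"
proof -
  let ?R = "MC_nonlinear u"
  have "?R = l 1 [h1 ?R] + h2 (l 1 [?R])"
    using homotopy MC_nonlinear_in_Vd1[OF u] by simp
  then have R: "h2 (l 1 [?R]) = ?R - l 1 [h1 ?R]"
    by (metis add_diff_cancel_left')
  have "l 1 [u] = l 1 [s *\<^sub>R u1 - h1 ?R]"
    using kuranishi by (rule arg_cong)
  also have "\<dots> = s *\<^sub>R l 1 [u1] - l 1 [h1 ?R]"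
    by (simp only: linear_diff[OF linear_bracket_1] linear_scale[OF linear_bracket_1])
  finally have "l 1 [u] = - l 1 [h1 ?R]"
    using u1 by simp
  then have "MC l u = h2 (l 1 [?R])"
    unfolding R by (simp add: MC_eq_linear_plus_nonlinear)
  moreover have "l 1 [MC l u] = l 1 [?R]"
    unfolding MC_eq_linear_plus_nonlinear linear_add[OF linear_bracket_1]
    using bracket_1_bracket_1[OF u] by simp
  ultimately show ?thesis by simp
qed

text \<open>By the Bianchi identity, the curvature of a solution u of the Kuranishi equation is a fixed
  point of the linear map bianchi_op u, whose size is O(u).\<close>

definition bianchi_op :: "'v \<Rightarrow> 'v \<Rightarrow> 'v" where
  "bianchi_op u y = - (\<Sum>j\<in>{1..<N}. (1 / fact j) *\<^sub>R h2 (l (Suc j) (y # replicate j u)))"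

lemma bianchi_op_MC:
  assumes "u \<in> Vd 0" "MC l u = h2 (l 1 [MC l u])"
  shows "bianchi_op u (MC l u) = MC l u"
  using assms(2) unfolding bracket_1_MC[OF assms(1)] bianchi_op_def
  by (simp add: linear_neg[OF h2(1)] linear_sum[OF h2(1)] linear_scale[OF h2(1)])

lemma linear_bianchi_op: "linear (bianchi_op u)"
proof -
  have lin: "linear (\<lambda>y. h2 (l (Suc j) (y # replicate j u)))" for j
    using linear_compose[OF linear_bracket_head[of "replicate j u"] h2(1)] by (simp add: o_def)
  show ?thesis
    by (intro linearI) (simp_all add: bianchi_op_def linear_add[OF lin] linear_scale[OF lin]
        sum.distrib scaleR_add_right scaleR_sum_right)
qed

lemma bianchi_op_in_Vd1:
  assumes "u \<in> Vd 0" "y \<in> Vd 1"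
  shows "bianchi_op u y \<in> Vd 1"
proof -
  have "h2 (l (Suc j) (y # replicate j u)) \<in> Vd 1" for j
  proof -
    have "set (replicate j u) \<subseteq> Vd 0" using assms(1) by auto
    then show ?thesis using bracket_head_in_Vd2[of y "replicate j u"] assms(2) h2(2) by auto
  qed
  then show ?thesis
    unfolding bianchi_op_def by (intro subspace_neg[OF subspace_Vd] Vd_sum Vd_scaleR)
qed

definition bianchi_bound :: "'v set \<Rightarrow> 'v set \<Rightarrow> real" where
  "bianchi_bound B C = (\<Sum>c\<in>C. \<Sum>j\<in>{1..<N}. \<Sum>bs\<in>lists_of_length B j.
     coord_norm C (h2 (l (Suc j) (c # bs))) / fact j)"

lemma bianchi_bound_nonneg: "0 \<le> bianchi_bound B C"
  unfolding bianchi_bound_def by (intro sum_nonneg divide_nonneg_pos coord_norm_nonneg) auto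

context
  fixes B C :: "'v set"
  assumes B: "finite B" "B \<subseteq> Vd 0" and C: "independent C" "finite C" "span C = Vd 1"
begin

lemma coord_norm_bianchi_op_le:
  assumes x: "\<And>b. b \<in> B \<Longrightarrow> \<bar>x b\<bar> \<le> \<rho>" and \<rho>: "0 \<le> \<rho>" "\<rho> \<le> 1" and c: "c \<in> C"
  shows "coord_norm C (bianchi_op (\<Sum>b\<in>B. x b *\<^sub>R b) c) \<le>
    \<rho> * (\<Sum>j\<in>{1..<N}. \<Sum>bs\<in>lists_of_length B j. coord_norm C (h2 (l (Suc j) (c # bs))) / fact j)"
proof -
  let ?E = "\<lambda>j bs. h2 (l (Suc j) (c # bs))"
  let ?p = "\<lambda>bs. prod_list (map x bs)"
  have E: "?E j bs \<in> span C" if "bs \<in> lists_of_length B j" for j bs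
    using that B(2) C(3) c h2(2) bracket_head_in_Vd2[of c bs] span_superset[of C]
    by (force simp: lists_of_length_def)
  have "bianchi_op (\<Sum>b\<in>B. x b *\<^sub>R b) c =
      - (\<Sum>j\<in>{1..<N}. \<Sum>bs\<in>lists_of_length B j. (?p bs / fact j) *\<^sub>R ?E j bs)"
    unfolding bianchi_op_def bracket_head_replicate_sum[OF B(1)]
    by (simp add: linear_sum[OF h2(1)] linear_scale[OF h2(1)] scaleR_sum_right)
  then have "coord_norm C (bianchi_op (\<Sum>b\<in>B. x b *\<^sub>R b) c) =
      coord_norm C (\<Sum>j\<in>{1..<N}. \<Sum>bs\<in>lists_of_length B j. (?p bs / fact j) *\<^sub>R ?E j bs)"
    using E by (simp add: coord_norm_uminus[OF C(1,2)] real_vector.span_sum real_vector.span_scale)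
  also have "\<dots> \<le> (\<Sum>j\<in>{1..<N}. \<Sum>bs\<in>lists_of_length B j. coord_norm C ((?p bs / fact j) *\<^sub>R ?E j bs))"
    using E by (intro order_trans[OF coord_norm_sum_le[OF C(1,2)]] sum_mono coord_norm_sum_le[OF C(1,2)]
        real_vector.span_sum real_vector.span_scale)
  also have "\<dots> = (\<Sum>j\<in>{1..<N}. \<Sum>bs\<in>lists_of_length B j. \<bar>?p bs / fact j\<bar> * coord_norm C (?E j bs))"
    using E by (simp add: coord_norm_scaleR[OF C(1,2)])
  also have "\<dots> \<le> (\<Sum>j\<in>{1..<N}. \<Sum>bs\<in>lists_of_length B j. \<rho> * (coord_norm C (?E j bs) / fact j))"
  proof (intro sum_mono)
    fix j bs assume j: "j \<in> {1..<N}" and bs: "bs \<in> lists_of_length B j"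
    have "\<bar>?p bs\<bar> \<le> \<rho> ^ length bs"
      using bs x by (intro abs_prod_list_le) (auto simp: lists_of_length_def)
    also have "\<dots> \<le> \<rho>"
      using bs j \<rho> power_decreasing[of 1 "length bs" \<rho>] by (auto simp: lists_of_length_def)
    finally show "\<bar>?p bs / fact j\<bar> * coord_norm C (?E j bs) \<le> \<rho> * (coord_norm C (?E j bs) / fact j)"
      by (simp add: mult_right_mono coord_norm_nonneg divide_right_mono)
  qed
  finally show ?thesis by (simp add: sum_distrib_left)
qed

lemma bianchi_op_fixed_point_eq_0:
  assumes x: "\<And>b. b \<in> B \<Longrightarrow> \<bar>x b\<bar> \<le> \<rho>"
    and \<rho>: "0 \<le> \<rho>" "\<rho> \<le> 1" "\<rho> * bianchi_bound B C < 1"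
    and y: "y \<in> Vd 1" "bianchi_op (\<Sum>b\<in>B. x b *\<^sub>R b) y = y"
  shows "y = 0"
proof (rule linear_coord_contraction_fixed_point[OF C(1,2) linear_bianchi_op])
  let ?u = "\<Sum>b\<in>B. x b *\<^sub>R b"
  have u: "?u \<in> Vd 0" using B(2) by (intro Vd_sum Vd_scaleR) auto
  show "bianchi_op ?u ` span C \<subseteq> span C"
    using bianchi_op_in_Vd1[OF u] C(3) by auto
  have "(\<Sum>c\<in>C. coord_norm C (bianchi_op ?u c)) \<le> (\<Sum>c\<in>C. \<rho> * (\<Sum>j\<in>{1..<N}.
      \<Sum>bs\<in>lists_of_length B j. coord_norm C (h2 (l (Suc j) (c # bs))) / fact j))"
    by (intro sum_mono coord_norm_bianchi_op_le[OF x \<rho>(1,2)])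
  also have "\<dots> = \<rho> * bianchi_bound B C"
    by (simp add: bianchi_bound_def sum_distrib_left)
  finally show "(\<Sum>c\<in>C. coord_norm C (bianchi_op ?u c)) < 1" using \<rho>(3) by simp
qed (use y C(3) in auto)

lemma MC_eq_0_if_kuranishi:
  assumes x: "\<And>b. b \<in> B \<Longrightarrow> \<bar>x b\<bar> \<le> \<rho>"
    and \<rho>: "0 \<le> \<rho>" "\<rho> \<le> 1" "\<rho> * bianchi_bound B C < 1"
    and u1: "l 1 [u1] = 0"
    and kuranishi: "(\<Sum>b\<in>B. x b *\<^sub>R b) = s *\<^sub>R u1 - h1 (MC_nonlinear (\<Sum>b\<in>B. x b *\<^sub>R b))"
  shows "MC l (\<Sum>b\<in>B. x b *\<^sub>R b) = 0"
proof -
  let ?u = "\<Sum>b\<in>B. x b *\<^sub>R b"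
  have u: "?u \<in> Vd 0" using B(2) by (intro Vd_sum Vd_scaleR) auto
  have "bianchi_op ?u (MC l ?u) = MC l ?u"
    using bianchi_op_MC[OF u MC_eq_h2_bracket_1_MC[OF u u1 kuranishi]] .
  then show ?thesis
    using bianchi_op_fixed_point_eq_0[OF x \<rho> MC_in_Vd1[OF u]] by simp
qed

end

lemma kuranishi_equation_of_coords:
  assumes B: "finite B"
    and u1: "u1 = (\<Sum>b\<in>B. \<gamma> b *\<^sub>R b)"
    and \<tau>: "\<And>k bs. bs \<in> lists_of_length B k \<Longrightarrow> h1 (l k bs) = (\<Sum>b\<in>B. \<tau> k bs b *\<^sub>R b)"
    and x: "\<And>b. b \<in> B \<Longrightarrow> x b = \<gamma> b * s -
      (\<Sum>k\<in>{2..<N}. \<Sum>bs\<in>lists_of_length B k. \<tau> k bs b / fact k * prod_list (map x bs))"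
  shows "(\<Sum>b\<in>B. x b *\<^sub>R b) = s *\<^sub>R u1 - h1 (MC_nonlinear (\<Sum>b\<in>B. x b *\<^sub>R b))"
proof -
  let ?P = "\<lambda>bs. prod_list (map x bs)"
  let ?c = "\<lambda>k bs b. \<tau> k bs b / fact k * ?P bs"
  have "x b *\<^sub>R b = (\<gamma> b * s) *\<^sub>R b - (\<Sum>k\<in>{2..<N}. \<Sum>bs\<in>lists_of_length B k. ?c k bs b) *\<^sub>R b"
    if "b \<in> B" for b
    using arg_cong[OF x[OF that], of "\<lambda>r. r *\<^sub>R b"] by (simp only: scaleR_diff_left)
  then have "(\<Sum>b\<in>B. x b *\<^sub>R b) = s *\<^sub>R u1 -
      (\<Sum>b\<in>B. \<Sum>k\<in>{2..<N}. \<Sum>bs\<in>lists_of_length B k. ?c k bs b *\<^sub>R b)"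
    by (simp add: u1 sum_subtractf scaleR_sum_right scaleR_sum_left mult.commute)
  also have "(\<Sum>b\<in>B. \<Sum>k\<in>{2..<N}. \<Sum>bs\<in>lists_of_length B k. ?c k bs b *\<^sub>R b)
      = (\<Sum>k\<in>{2..<N}. \<Sum>bs\<in>lists_of_length B k. \<Sum>b\<in>B. ?c k bs b *\<^sub>R b)"
    by (subst sum.swap) (intro sum.cong refl sum.swap)
  also have "\<dots> = (\<Sum>k\<in>{2..<N}. \<Sum>bs\<in>lists_of_length B k. (?P bs / fact k) *\<^sub>R h1 (l k bs))"
    by (intro sum.cong refl) (simp add: \<tau> scaleR_sum_right mult.commute)
  also have "\<dots> = h1 (MC_nonlinear (\<Sum>b\<in>B. x b *\<^sub>R b))"
    unfolding MC_nonlinear_def bracket_replicate_sum[OF B]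
    by (simp add: linear_sum[OF h1(1)] linear_scale[OF h1(1)] scaleR_sum_right)
  finally show ?thesis .
qed

lemma kuranishi_coefficients:
  assumes B: "finite B" "Vd 0 = span B" and u1: "u1 \<in> Vd 0"
  obtains \<gamma> \<tau> where "u1 = (\<Sum>b\<in>B. \<gamma> b *\<^sub>R b)"
    "\<And>k bs. bs \<in> lists_of_length B k \<Longrightarrow> h1 (l k bs) = (\<Sum>b\<in>B. \<tau> k bs b *\<^sub>R b)"
proof -
  have coords: "\<exists>t. v = (\<Sum>b\<in>B. t b *\<^sub>R b)" if "v \<in> Vd 0" for v
    using B real_vector.span_finite[OF B(1)] that by auto
  obtain \<gamma> where \<gamma>: "u1 = (\<Sum>b\<in>B. \<gamma> b *\<^sub>R b)" using coords[OF u1] by blast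
  have "\<forall>k bs. \<exists>t. bs \<in> lists_of_length B k \<longrightarrow> h1 (l k bs) = (\<Sum>b\<in>B. t b *\<^sub>R b)"
  proof (intro allI)
    fix k bs
    have "bs \<in> lists_of_length B k \<Longrightarrow> h1 (l k bs) \<in> Vd 0"
      using bracket_in_Vd1[of bs] B(2) h1(2) span_superset[of B]
      by (auto simp: lists_of_length_def)
    then show "\<exists>t. bs \<in> lists_of_length B k \<longrightarrow> h1 (l k bs) = (\<Sum>b\<in>B. t b *\<^sub>R b)"
      using coords by blast
  qed
  then show ?thesis using that[OF \<gamma>] by metis
qed

lemma majorant_constants:
  fixes G K M :: real
  assumes "0 \<le> G" "0 \<le> K" "0 \<le> M"
  obtains \<rho> r where "0 < \<rho>" "\<rho> \<le> 1" "\<rho> * M < 1" "0 < r" "G * r + K * \<rho>\<^sup>2 \<le> \<rho>"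
proof
  define \<rho> where "\<rho> = 1 / (2 * K + 2 * M + 2)"
  show \<rho>: "0 < \<rho>" "\<rho> \<le> 1" "\<rho> * M < 1"
    using assms by (simp_all add: \<rho>_def field_simps)
  show "0 < \<rho> / (2 * G + 2)" using \<rho>(1) assms by simp
  have "K * \<rho> \<le> 1 / 2" using assms by (simp add: \<rho>_def field_simps)
  then have "K * \<rho>\<^sup>2 \<le> \<rho> / 2"
    using mult_right_mono[of _ "1 / 2" \<rho>] \<rho>(1) by (simp add: power2_eq_square mult.assoc)
  moreover have "G * (\<rho> / (2 * G + 2)) \<le> \<rho> / 2" using assms \<rho>(1) by (simp add: field_simps)
  ultimately show "G * (\<rho> / (2 * G + 2)) + K * \<rho>\<^sup>2 \<le> \<rho>" by linarith
qed

lemma analytic_MC_curve: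
  assumes fin: "\<And>d. \<exists>B. finite B \<and> Vd d = span B"
    and u1: "u1 \<in> Vd 0" "l 1 [u1] = 0"
  obtains B r A where "finite B" "B \<subseteq> Vd 0" "0 < r"
    "\<And>b. b \<in> B \<Longrightarrow> ereal r \<le> fps_conv_radius (A b)"
    "\<And>b. b \<in> B \<Longrightarrow> fps_nth (A b) 0 = 0"
    "(\<Sum>b\<in>B. fps_nth (A b) 1 *\<^sub>R b) = u1"
    "\<And>s. \<bar>s\<bar> < r \<Longrightarrow> MC l (\<Sum>b\<in>B. eval_fps (A b) s *\<^sub>R b) = 0"
proof -
  obtain B where B: "finite B" "Vd 0 = span B" using fin by blast
  have BV: "B \<subseteq> Vd 0" using B(2) real_vector.span_superset by blast
  obtain C where C: "independent C" "finite C" "span C = Vd 1"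
    using fin[of 1] finite_independent_spanning_subset by metis
  obtain \<gamma> \<tau> where \<gamma>: "u1 = (\<Sum>b\<in>B. \<gamma> b *\<^sub>R b)"
    and \<tau>: "\<And>k bs. bs \<in> lists_of_length B k \<Longrightarrow> h1 (l k bs) = (\<Sum>b\<in>B. \<tau> k bs b *\<^sub>R b)"
    using kuranishi_coefficients[OF B u1(1)] by blast
  interpret F: fps_fixed_point_system B N \<gamma> "\<lambda>k bs b. \<tau> k bs b / fact k"
    by unfold_locales (rule B(1))
  obtain \<rho> r where \<rho>: "0 < \<rho>" "\<rho> \<le> 1" "\<rho> * bianchi_bound B C < 1" and r: "0 < r"
    and majorant: "F.lin_size * r + F.nonlin_size * \<rho>\<^sup>2 \<le> \<rho>"
    using majorant_constants[OF F.lin_size_nonneg F.nonlin_size_nonneg bianchi_bound_nonneg] by blast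
  note radius = F.fps_conv_radius_solution[OF _ _ \<rho>(2) majorant]
  show ?thesis
  proof (rule that[OF B(1) BV r])
    show "ereal r \<le> fps_conv_radius (F.solution b)" if "b \<in> B" for b
      using radius[OF _ _ that] r \<rho> by simp
    show "fps_nth (F.solution b) 0 = 0" if "b \<in> B" for b
      using F.solution_nth_0[OF that] .
    show "(\<Sum>b\<in>B. fps_nth (F.solution b) 1 *\<^sub>R b) = u1"
      using F.solution_nth_1 \<gamma> by simp
  next
    fix s :: real assume s: "\<bar>s\<bar> < r"
    define x where "x = (\<lambda>b. eval_fps (F.solution b) s)"
    have rad_s: "ereal \<bar>s\<bar> < fps_conv_radius (F.solution b)" if "b \<in> B" for b
      by (rule less_le_trans[OF _ radius[OF _ _ that]]) (use s r \<rho> in auto)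
    have "x b = \<gamma> b * s -
      (\<Sum>k\<in>{2..<N}. \<Sum>bs\<in>lists_of_length B k. \<tau> k bs b / fact k * prod_list (map x bs))"
      if "b \<in> B" for b
      using F.eval_step[where F = F.solution and s = s and b = b, OF rad_s] F.step_solution[OF that]
      by (simp add: x_def)
    then have "(\<Sum>b\<in>B. x b *\<^sub>R b) = s *\<^sub>R u1 - h1 (MC_nonlinear (\<Sum>b\<in>B. x b *\<^sub>R b))"
      using kuranishi_equation_of_coords[OF B(1) \<gamma> \<tau>] by blast
    moreover have "\<bar>x b\<bar> \<le> \<rho>" if "b \<in> B" for b
      using F.abs_eval_solution_le[OF _ _ \<rho>(2) majorant that] r \<rho> s by (simp add: x_def)
    ultimately show "MC l (\<Sum>b\<in>B. eval_fps (F.solution b) s *\<^sub>R b) = 0"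
      using MC_eq_0_if_kuranishi[OF B(1) BV C _ _ \<rho>(2,3) u1(2)] \<rho>(1) by (simp add: x_def)
  qed
qed

end

section \<open>Smooth reparametrization\<close>

definition exp_reparam :: "real \<Rightarrow> real \<Rightarrow> real" where
  "exp_reparam c t = c - c * exp (- t / c)"

lemma exp_reparam_0 [simp]: "exp_reparam c 0 = 0"
  by (simp add: exp_reparam_def)

lemma exp_reparam_bounds:
  assumes "0 < c" "0 \<le> t"
  shows "0 \<le> exp_reparam c t" "exp_reparam c t < c"
  using assms by (simp_all add: exp_reparam_def mult_le_cancel_left1)

lemma has_real_derivative_exp_reparam:
  assumes "0 < c"
  shows "(exp_reparam c has_real_derivative 1 - exp_reparam c t / c) (at t)"
proof -
  have "((\<lambda>t. c - c * exp (- t / c)) has_real_derivative 0 - c * (exp (- t / c) * (- 1 / c))) (at t)"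
    using assms by (intro derivative_eq_intros) auto
  then show ?thesis
    using assms unfolding exp_reparam_def[abs_def] by (simp add: field_simps)
qed

text \<open>Since the derivative of exp_reparam c is 1 - exp_reparam c / c, the k-th derivative of
  t \<mapsto> f (exp_reparam c t) is again a power series evaluated at exp_reparam c t.\<close>

primrec reparam_deriv :: "real \<Rightarrow> real fps \<Rightarrow> nat \<Rightarrow> real fps" where
  "reparam_deriv c f 0 = f"
| "reparam_deriv c f (Suc k) = fps_deriv (reparam_deriv c f k) * (1 - fps_const (1 / c) * fps_X)"

lemma fps_conv_radius_one_minus_const_X: "fps_conv_radius (1 - fps_const a * fps_X :: real fps) = \<infinity>"
  using fps_conv_radius_diff[of 1 "fps_const a * fps_X :: real fps"]
    fps_conv_radius_mult[of "fps_const a" "fps_X :: real fps"] by simp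

lemma eval_fps_one_minus_const_X: "eval_fps (1 - fps_const a * fps_X) z = 1 - a * z"
  for z :: real
  by (simp add: eval_fps_diff eval_fps_mult fps_conv_radius_one_minus_const_X
      fps_conv_radius_mult_gt[of z "fps_const a" fps_X, simplified])

lemma fps_conv_radius_reparam_deriv: "fps_conv_radius f \<le> fps_conv_radius (reparam_deriv c f k)"
proof (induction k)
  case (Suc k)
  then show ?case
    using fps_conv_radius_one_minus_const_X[of "1 / c"] fps_conv_radius_deriv[of "reparam_deriv c f k"]
      fps_conv_radius_mult[of "fps_deriv (reparam_deriv c f k)" "1 - fps_const (1 / c) * fps_X"]
    by simp
qed simp

lemma has_real_derivative_eval_reparam_deriv:
  assumes c: "0 < c" and rad: "ereal c \<le> fps_conv_radius f" and t: "0 \<le> t"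
  shows "((\<lambda>t. eval_fps (reparam_deriv c f k) (exp_reparam c t)) has_real_derivative
    eval_fps (reparam_deriv c f (Suc k)) (exp_reparam c t)) (at t)"
proof -
  let ?g = "reparam_deriv c f k" and ?z = "exp_reparam c t"
  have "ereal (norm ?z) < ereal c" using exp_reparam_bounds[OF c t] by simp
  also have "\<dots> \<le> fps_conv_radius ?g" using rad fps_conv_radius_reparam_deriv by (rule order_trans)
  finally have r: "ereal (norm ?z) < fps_conv_radius ?g" .
  have "((\<lambda>t. eval_fps ?g (exp_reparam c t)) has_real_derivative
      eval_fps (fps_deriv ?g) ?z * (1 - ?z / c)) (at t)"
    by (rule DERIV_chain2[OF has_field_derivative_eval_fps[OF r] has_real_derivative_exp_reparam[OF c]])
  moreover have "eval_fps (reparam_deriv c f (Suc k)) ?z = eval_fps (fps_deriv ?g) ?z * (1 - ?z / c)"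
    using less_le_trans[OF r fps_conv_radius_deriv]
    by (simp add: eval_fps_mult fps_conv_radius_one_minus_const_X eval_fps_one_minus_const_X)
  ultimately show ?thesis by simp
qed

lemma Cinf_on_eval_reparam:
  fixes B :: "'a::real_normed_vector set"
  assumes B: "finite B" and c: "0 < c" and rad: "\<And>b. b \<in> B \<Longrightarrow> ereal c \<le> fps_conv_radius (A b)"
    and S: "S \<subseteq> {0..}"
  defines "u \<equiv> \<lambda>t. \<Sum>b\<in>B. eval_fps (A b) (exp_reparam c t) *\<^sub>R b"
  shows "Cinf_on S u" and "(u has_vector_derivative (\<Sum>b\<in>B. fps_nth (A b) 1 *\<^sub>R b)) (at 0 within S)"
proof -
  define D where "D k t = (\<Sum>b\<in>B. eval_fps (reparam_deriv c (A b) k) (exp_reparam c t) *\<^sub>R b)" for k t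
  have D: "(D k has_vector_derivative D (Suc k) t) (at t)" if "0 \<le> t" for k t
    unfolding D_def[abs_def]
  proof (rule has_vector_derivative_sum)
    fix b assume "b \<in> B"
    from has_vector_derivative_scaleR[OF has_real_derivative_eval_reparam_deriv[OF c rad[OF this] that]
        has_vector_derivative_const[of b]]
    show "((\<lambda>t. eval_fps (reparam_deriv c (A b) k) (exp_reparam c t) *\<^sub>R b) has_vector_derivative
      eval_fps (reparam_deriv c (A b) (Suc k)) (exp_reparam c t) *\<^sub>R b) (at t)"
      by simp
  qed
  have "D 0 = u" by (simp add: D_def[abs_def] u_def)
  moreover have "\<forall>k. \<forall>t\<in>S. (D k has_vector_derivative D (Suc k) t) (at t within S)"
    using D S by (auto intro: has_vector_derivative_at_within)
  ultimately show "Cinf_on S u"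
    unfolding Cinf_on_def by auto
  have "D 1 0 = (\<Sum>b\<in>B. fps_nth (A b) 1 *\<^sub>R b)"
    by (simp add: D_def eval_fps_at_0 fps_deriv_nth)
  then show "(u has_vector_derivative (\<Sum>b\<in>B. fps_nth (A b) 1 *\<^sub>R b)) (at 0 within S)"
    using D[of 0 0] \<open>D 0 = u\<close> by (auto intro: has_vector_derivative_at_within)
qed

lemma Cinf_on_subset: "Cinf_on S u \<Longrightarrow> T \<subseteq> S \<Longrightarrow> Cinf_on T u"
  unfolding Cinf_on_def by (blast intro: has_vector_derivative_within_subset)

lemma (in Linf_homotopy) smooth_MC_curve:
  assumes fin: "\<And>d. \<exists>B. finite B \<and> Vd d = span B"
    and u1: "u1 \<in> Vd 0" "l 1 [u1] = 0"
  obtains u where "Cinf_on {0..} u" "u 0 = 0" "\<And>t. 0 \<le> t \<Longrightarrow> u t \<in> Vd 0 \<and> MC l (u t) = 0"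
    "(u has_vector_derivative u1) (at 0 within {0..})"
proof -
  obtain B r A where B: "finite B" "B \<subseteq> Vd 0" and r: "0 < r"
    and rad: "\<And>b. b \<in> B \<Longrightarrow> ereal r \<le> fps_conv_radius (A b)"
    and A0: "\<And>b. b \<in> B \<Longrightarrow> fps_nth (A b) 0 = 0"
    and A1: "(\<Sum>b\<in>B. fps_nth (A b) 1 *\<^sub>R b) = u1"
    and MC0: "\<And>s. \<bar>s\<bar> < r \<Longrightarrow> MC l (\<Sum>b\<in>B. eval_fps (A b) s *\<^sub>R b) = 0"
    using analytic_MC_curve[OF fin u1] by blast
  define c where "c = r / 2"
  have c: "0 < c" "c < r" using r by (simp_all add: c_def)
  have rad_c: "ereal c \<le> fps_conv_radius (A b)" if "b \<in> B" for b
    by (rule order_trans[OF _ rad[OF that]]) (use c in simp)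
  define u where "u t = (\<Sum>b\<in>B. eval_fps (A b) (exp_reparam c t) *\<^sub>R b)" for t
  show ?thesis
  proof (rule that)
    show "Cinf_on {0..} u" "(u has_vector_derivative u1) (at 0 within {0..})"
      using Cinf_on_eval_reparam[where A = A and S = "{0..}", OF B(1) c(1) rad_c] A1
      by (simp_all add: u_def[abs_def])
    show "u 0 = 0" using A0 by (simp add: u_def eval_fps_at_0)
    fix t :: real assume t: "0 \<le> t"
    show "u t \<in> Vd 0 \<and> MC l (u t) = 0"
    proof
      show "u t \<in> Vd 0" unfolding u_def using B(2) by (intro Vd_sum Vd_scaleR) auto
      have "\<bar>exp_reparam c t\<bar> < r" using exp_reparam_bounds[OF c(1) t] c by auto
      then show "MC l (u t) = 0" unfolding u_def by (rule MC0)
    qed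
  qed
qed

theorem theorem5p16:
  fixes Vd :: "int \<Rightarrow> 'v::real_normed_vector set"
    and l :: "nat \<Rightarrow> 'v list \<Rightarrow> 'v"
    and N :: nat
    and h1 h2 :: "'v \<Rightarrow> 'v"
    and u1 :: 'v
  assumes Linf: "Linf_algebra Vd l"
    and strict: "\<forall>k\<ge>N. \<forall>xs. l k xs = 0"
    and findim: "\<forall>d. \<exists>B. finite B \<and> Vd d = span B"
    and H1_zero: "{x \<in> Vd 1. l 1 [x] = 0} = (\<lambda>x. l 1 [x]) ` Vd 0"
    and h1: "linear h1" "h1 ` Vd 1 \<subseteq> Vd 0"
    and h2: "linear h2" "h2 ` Vd 2 \<subseteq> Vd 1"
    and homotopy: "\<forall>x\<in>Vd 1. l 1 [h1 x] + h2 (l 1 [x]) = x"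
    and u1: "u1 \<in> Vd 0" "l 1 [u1] = 0"
    and small: "12 * norm u1 * opnorm_on (Vd 1) h1 * alpha_l Vd l N < 1"
  shows "\<exists>u :: real \<Rightarrow> 'v. Cinf_on {0..<2} u \<and> u 0 = 0 \<and>
           (\<forall>t\<in>{0..<2}. u t \<in> Vd 0 \<and> MC l (u t) = 0) \<and>
           (u has_vector_derivative u1) (at 0 within {0..<2})"
proof -
  interpret Linf_homotopy Vd l N h1 h2
    by (intro Linf_homotopy.intro strict_Linf_algebra.intro Linf_homotopy_axioms.intro Linf strict
        h1 h2 homotopy)
  obtain u where u: "Cinf_on {0..} u" "u 0 = 0" "\<And>t. 0 \<le> t \<Longrightarrow> u t \<in> Vd 0 \<and> MC l (u t) = 0"
    "(u has_vector_derivative u1) (at 0 within {0..})"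
    using smooth_MC_curve findim u1 by blast
  have S: "{0..<2} \<subseteq> {0::real..}" by auto
  show ?thesis
    using Cinf_on_subset[OF u(1) S] has_vector_derivative_within_subset[OF u(4) S] u(2,3) by auto
qed

end
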